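(* Let $d\ge2$, $1\le r_p\le n_p$ for $1\le p\le d$, let $f:\Omega\to\mathbb{R}$ be any function on $\Omega=\mathrm{St}(r_1,n_1,\mathbb{C})\times\cdots\times\mathrm{St}(r_d,n_d,\mathbb{C})$, and let $\tilde f=f\circ\rho$ on $\Upsilon=\mathcal{U}_{n_1}\times\cdots\times\mathcal{U}_{n_d}$. Then $f$ is scale invariant if and only if $\tilde f$ is scale invariant.
   Context: $\mathrm{St}(r,n,\mathbb{C})=\{X\in\mathbb{C}^{n\times r}:X^HX=I_r\}$, $\mathcal{U}_n$ the unitary group, and $\rho:\Upsilon\to\Omega$ keeps the first $r_p$ columns of the $p$-th component for each $p$. A function $g$ on $\mathrm{St}(r,n,\mathbb{C})$ is scale invariant if $g(XR)=g(X)$ for all $X$ and all $r\times r$ diagonal $R$ with unimodular diagonal entries. $f$ is scale invariant if for every $p$ and every fixed choice of the other components, the restricted function $X\mapsto f(X^{(1)},\dots,X^{(p-1)},X,X^{(p+1)},\dots,X^{(d)})$ on $\mathrm{St}(r_p,n_p,\mathbb{C})$ is scale invariant; $\tilde f$ is scale invariant in the same sense, with $\mathcal{U}_{n_p}=\mathrm{St}(n_p,n_p,\mathbb{C})$ in place of $\mathrm{St}(r_p,n_p,\mathbb{C})$. *)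

theory Defs
  imports "Jordan_Normal_Form.Schur_Decomposition"
begin

definition stiefel :: "nat \<Rightarrow> nat \<Rightarrow> complex mat set" where
  "stiefel r n = {X. X \<in> carrier_mat n r \<and> mat_adjoint X * X = 1\<^sub>m r}"

definition unimod_diag :: "nat \<Rightarrow> complex mat set" where
  "unimod_diag r = {R. R \<in> carrier_mat r r \<and> diagonal_mat R \<and> (\<forall>i<r. cmod (R $$ (i,i)) = 1)}"

definition scale_inv_St :: "nat \<Rightarrow> nat \<Rightarrow> (complex mat \<Rightarrow> real) \<Rightarrow> bool" where
  "scale_inv_St r n g \<longleftrightarrow> (\<forall>X\<in>stiefel r n. \<forall>R\<in>unimod_diag r. g (X * R) = g X)"

text \<open>A point of the product St(r_1,n_1) x ... x St(r_d,n_d) is a list of length d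
  (components indexed 0..d-1).\<close>
definition multi_scale_inv ::
  "nat \<Rightarrow> (nat \<Rightarrow> nat) \<Rightarrow> (nat \<Rightarrow> nat) \<Rightarrow> (complex mat list \<Rightarrow> real) \<Rightarrow> bool" where
  "multi_scale_inv d r n f \<longleftrightarrow>
     (\<forall>p<d. \<forall>Xs. length Xs = d \<and> (\<forall>q<d. q \<noteq> p \<longrightarrow> Xs ! q \<in> stiefel (r q) (n q)) \<longrightarrow>
        scale_inv_St (r p) (n p) (\<lambda>X. f (Xs[p := X])))"

definition first_cols :: "nat \<Rightarrow> complex mat \<Rightarrow> complex mat" where
  "first_cols k X = mat (dim_row X) k (\<lambda>(i,j). X $$ (i,j))"

definition rho :: "nat \<Rightarrow> (nat \<Rightarrow> nat) \<Rightarrow> complex mat list \<Rightarrow> complex mat list" where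
  "rho d r Us = map (\<lambda>p. first_cols (r p) (Us ! p)) [0..<d]"

end

theory Submission
  imports Defs
begin

text \<open>Write \<open>U\<^sub>k\<close> for the first \<open>k\<close> columns of \<open>U\<close>. The map \<open>U \<mapsto> U\<^sub>k\<close> sends \<open>\<U>\<^sub>m\<close> onto
  \<open>St(k,m,\<complex>)\<close>, because every orthonormal family extends to an orthonormal basis. For diagonal
  \<open>R\<close> we have \<open>(U R)\<^sub>k = U\<^sub>k R\<^sub>k\<close>, where \<open>R\<^sub>k\<close> is the leading \<open>k \<times> k\<close> block of \<open>R\<close>, and \<open>R \<mapsto> R\<^sub>k\<close> sends
  the unimodular diagonal matrices of size \<open>m\<close> onto those of size \<open>k\<close>. Hence \<open>g\<close> is scale invariant
  on \<open>St(k,m,\<complex>)\<close> iff \<open>U \<mapsto> g U\<^sub>k\<close> is scale invariant on \<open>\<U>\<^sub>m\<close>. Apply this in the \<open>p\<close>-th component: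
  \<open>\<rho>\<close> also maps the admissible choices of the other components onto each other.\<close>

definition orthonormal_list :: "complex vec list \<Rightarrow> bool" where
  "orthonormal_list vs \<longleftrightarrow>
     (\<forall>i<length vs. \<forall>j<length vs. vs ! i \<bullet>c vs ! j = (if i = j then 1 else 0))"

lemma orthonormal_list_corthogonal: "orthonormal_list vs \<Longrightarrow> corthogonal vs"
  unfolding orthonormal_list_def corthogonal_def by auto

lemma orthonormal_list_take: "orthonormal_list vs \<Longrightarrow> orthonormal_list (take k vs)"
  unfolding orthonormal_list_def by auto

lemma orthonormal_list_snoc:
  assumes "orthonormal_list vs" and "w \<bullet>c w = 1"
    and "\<forall>v\<in>set vs. w \<bullet>c v = 0 \<and> v \<bullet>c w = 0"
  shows "orthonormal_list (vs @ [w])"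
  using assms unfolding orthonormal_list_def
  by (auto simp: nth_append less_Suc_eq dest: nth_mem)

lemma exists_orthogonal_nonzero_vec:
  fixes vs :: "'a :: conjugatable_ordered_field vec list"
  assumes vs: "set vs \<subseteq> carrier_vec m" and orth: "corthogonal vs" and len: "length vs < m"
  shows "\<exists>w \<in> carrier_vec m. w \<noteq> 0\<^sub>v m \<and> (\<forall>v\<in>set vs. w \<bullet>c v = 0 \<and> v \<bullet>c w = 0)"
proof -
  interpret cof_vec_space m "TYPE('a)" .
  have "span (set vs) \<noteq> carrier_vec m"
  proof
    assume "span (set vs) = carrier_vec m"
    then have "m \<le> card (set vs)" using gen_ge_dim[OF finite_set vs] dim_is_n by simp
    with card_length[of vs] len show False by simp
  qed
  moreover have "span (set vs) \<subseteq> carrier_vec m" using span_closed[OF vs] by blast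
  ultimately obtain u where u: "u \<in> carrier_vec m" "u \<notin> span (set vs)" by blast
  define w where "w = adjuster m u vs + u"
  have w_orth: "corthogonal (w # vs)"
    unfolding w_def by (rule adjust_orthogonal[OF vs orth u])
  have w: "w \<in> carrier_vec m"
    unfolding w_def using u vs corthogonal_distinct[OF orth] by auto
  have "w \<bullet>c w \<noteq> 0" using corthogonalD[OF w_orth, of 0 0] by simp
  then have "w \<noteq> 0\<^sub>v m" using w by auto
  moreover have "w \<bullet>c v = 0 \<and> v \<bullet>c w = 0" if "v \<in> set vs" for v
  proof -
    obtain j where "j < length vs" "v = vs ! j" using \<open>v \<in> set vs\<close> by (metis in_set_conv_nth)
    then show ?thesis using corthogonalD[OF w_orth, of 0 "Suc j"] corthogonalD[OF w_orth, of "Suc j" 0]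
      by simp
  qed
  ultimately show ?thesis using w by blast
qed

lemma exists_unit_multiple:
  fixes w :: "complex vec"
  assumes w: "w \<in> carrier_vec m" "w \<noteq> 0\<^sub>v m"
  shows "\<exists>a. (a \<cdot>\<^sub>v w) \<bullet>c (a \<cdot>\<^sub>v w) = 1"
proof -
  have "w \<bullet>c w > 0" using w by simp
  then obtain t where t: "w \<bullet>c w = of_real t" "t > 0"
    by (auto simp: less_complex_def complex_eq_iff intro: exI[of _ "Re (w \<bullet>c w)"])
  define a where "a = complex_of_real (1 / sqrt t)"
  have "(a \<cdot>\<^sub>v w) \<bullet>c (a \<cdot>\<^sub>v w) = a * cnj a * of_real t"
    unfolding conjugate_smult_vec using w t(1) by (simp add: ac_simps)
  also have "\<dots> = 1" using t(2) by (simp add: a_def field_simps flip: of_real_mult)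
  finally show ?thesis by blast
qed

lemma orthonormal_list_extend:
  assumes "set vs \<subseteq> carrier_vec m" and "orthonormal_list vs" and "length vs \<le> m"
  shows "\<exists>ws. set ws \<subseteq> carrier_vec m \<and> orthonormal_list ws \<and> length ws = m \<and> take (length vs) ws = vs"
  using assms
proof (induction "m - length vs" arbitrary: vs)
  case 0
  then show ?case by auto
next
  case (Suc k)
  then have len: "length vs < m" by simp
  obtain w0 where w0: "w0 \<in> carrier_vec m" "w0 \<noteq> 0\<^sub>v m"
    and w0_orth: "\<forall>v\<in>set vs. w0 \<bullet>c v = 0 \<and> v \<bullet>c w0 = 0"
    using exists_orthogonal_nonzero_vec[OF Suc.prems(1) orthonormal_list_corthogonal[OF Suc.prems(2)] len]
    by blast
  obtain a where unit: "(a \<cdot>\<^sub>v w0) \<bullet>c (a \<cdot>\<^sub>v w0) = 1" using exists_unit_multiple[OF w0] by blast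
  define w where "w = a \<cdot>\<^sub>v w0"
  have "\<forall>v\<in>set vs. w \<bullet>c v = 0 \<and> v \<bullet>c w = 0"
    unfolding w_def conjugate_smult_vec using w0_orth w0(1) Suc.prems(1) by auto
  then have orth: "orthonormal_list (vs @ [w])"
    using orthonormal_list_snoc[OF Suc.prems(2)] unit unfolding w_def by blast
  have carrier: "set (vs @ [w]) \<subseteq> carrier_vec m"
    using Suc.prems(1) w0(1) unfolding w_def by auto
  have "k = m - length (vs @ [w])" "length (vs @ [w]) \<le> m"
    using Suc.hyps(2) len by auto
  then obtain ws where ws: "set ws \<subseteq> carrier_vec m" "orthonormal_list ws" "length ws = m"
    and prefix: "take (length (vs @ [w])) ws = vs @ [w]"
    using Suc.hyps(1)[OF _ carrier orth] by blast
  have "take (length vs) ws = vs"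
    using arg_cong[OF prefix, of "take (length vs)"] by (simp add: min_def)
  with ws show ?case by blast
qed

lemma mat_adjoint_mult_self_index:
  assumes "X \<in> carrier_mat m k" and "i < k" and "j < k"
  shows "(mat_adjoint X * X) $$ (i, j) = col X j \<bullet>c col X i"
  using assms conjugate_vec_sprod_comm[of "col X j" m "col X i"]
  by (simp add: mat_adjoint_def)

lemma stiefel_iff_orthonormal_cols:
  assumes X: "X \<in> carrier_mat m k"
  shows "X \<in> stiefel k m \<longleftrightarrow> orthonormal_list (cols X)"
proof -
  have "mat_adjoint X * X \<in> carrier_mat k k" using X unfolding mat_adjoint_def by auto
  then have "mat_adjoint X * X = 1\<^sub>m k \<longleftrightarrow>
     (\<forall>i<k. \<forall>j<k. (mat_adjoint X * X) $$ (i, j) = (if i = j then 1 else 0))"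
    by (auto intro!: eq_matI)
  also have "\<dots> \<longleftrightarrow> orthonormal_list (cols X)"
    unfolding orthonormal_list_def using X mat_adjoint_mult_self_index[OF X] by auto
  finally show ?thesis unfolding stiefel_def using X by auto
qed

lemma cols_first_cols:
  assumes "X \<in> carrier_mat m m'" and "k \<le> m'"
  shows "cols (first_cols k X) = take k (cols X)"
  using assms by (intro nth_equalityI) (auto simp: first_cols_def)

lemma first_cols_image_stiefel:
  assumes "k \<le> m"
  shows "first_cols k ` stiefel m m = stiefel k m"
proof (intro equalityI subsetI)
  fix X assume "X \<in> first_cols k ` stiefel m m"
  then obtain U where U: "U \<in> stiefel m m" "U \<in> carrier_mat m m" and X: "X = first_cols k U"
    unfolding stiefel_def by auto
  have "X \<in> carrier_mat m k" using U(2) unfolding X first_cols_def by auto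
  then show "X \<in> stiefel k m"
    using U stiefel_iff_orthonormal_cols orthonormal_list_take cols_first_cols assms
    unfolding X by metis
next
  fix Y assume Y: "Y \<in> stiefel k m"
  then have Y_carrier: "Y \<in> carrier_mat m k" unfolding stiefel_def by auto
  obtain ws where ws: "set ws \<subseteq> carrier_vec m" "orthonormal_list ws" "length ws = m"
    and prefix: "take k ws = cols Y"
    using orthonormal_list_extend[of "cols Y" m] Y Y_carrier stiefel_iff_orthonormal_cols assms
    by (fastforce simp: cols_def)
  define U where "U = mat_of_cols m ws"
  have U_carrier: "U \<in> carrier_mat m m" and "cols U = ws" unfolding U_def using ws by auto
  then have "U \<in> stiefel m m" using stiefel_iff_orthonormal_cols ws(2) by blast
  moreover have "cols (first_cols k U) = cols Y"
    using cols_first_cols[OF U_carrier assms] \<open>cols U = ws\<close> prefix by simp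
  then have "first_cols k U = Y"
    using mat_of_cols_cols[of "first_cols k U"] mat_of_cols_cols[of Y] U_carrier Y_carrier
    by (simp add: first_cols_def)
  ultimately show "Y \<in> first_cols k ` stiefel m m" by blast
qed

lemma first_cols_in_stiefel: "U \<in> stiefel m m \<Longrightarrow> k \<le> m \<Longrightarrow> first_cols k U \<in> stiefel k m"
  using first_cols_image_stiefel by blast

definition leading_block :: "nat \<Rightarrow> 'a mat \<Rightarrow> 'a mat" where
  "leading_block k R = mat k k (\<lambda>(i, j). R $$ (i, j))"

lemma first_cols_mult_diagonal:
  assumes X: "X \<in> carrier_mat m m" and R: "R \<in> carrier_mat m m" "diagonal_mat R"
    and k: "k \<le> m"
  shows "first_cols k (X * R) = first_cols k X * leading_block k R"
proof (rule eq_matI)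
  fix i j assume "i < dim_row (first_cols k X * leading_block k R)"
    and "j < dim_col (first_cols k X * leading_block k R)"
  then have i: "i < m" and j: "j < k" using X by (auto simp: first_cols_def leading_block_def)
  have off_diag: "R $$ (l, j) = 0" if "l < m" "l \<noteq> j" for l
    using R that j k unfolding diagonal_mat_def by auto
  have "first_cols k (X * R) $$ (i, j) = (\<Sum>l\<in>{0..<m}. X $$ (i, l) * R $$ (l, j))"
    using X R i j k by (simp add: first_cols_def scalar_prod_def)
  also have "\<dots> = X $$ (i, j) * R $$ (j, j)"
    using j k off_diag by (subst sum.remove[of _ j]) (auto intro!: sum.neutral)
  also have "\<dots> = (\<Sum>l\<in>{0..<k}. X $$ (i, l) * R $$ (l, j))"
    using j k off_diag by (subst sum.remove[of _ j]) (auto intro!: sum.neutral)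
  also have "\<dots> = (first_cols k X * leading_block k R) $$ (i, j)"
    using X R i j k by (simp add: first_cols_def leading_block_def scalar_prod_def)
  finally show "first_cols k (X * R) $$ (i, j) = (first_cols k X * leading_block k R) $$ (i, j)" .
qed (use X R in \<open>auto simp: first_cols_def leading_block_def\<close>)

lemma leading_block_image_unimod_diag:
  assumes k: "k \<le> m"
  shows "leading_block k ` unimod_diag m = unimod_diag k"
proof (intro equalityI subsetI)
  fix S assume "S \<in> leading_block k ` unimod_diag m"
  then show "S \<in> unimod_diag k"
    using k unfolding unimod_diag_def leading_block_def diagonal_mat_def by auto
next
  fix S assume S: "S \<in> unimod_diag k"
  define R where "R = mat m m (\<lambda>(i, j). if i = j then if i < k then S $$ (i, i) else 1 else 0)"
  have "R \<in> unimod_diag m"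
    using S unfolding R_def unimod_diag_def diagonal_mat_def by auto
  moreover have "leading_block k R = S"
    using S k by (intro eq_matI) (auto simp: leading_block_def R_def unimod_diag_def diagonal_mat_def)
  ultimately show "S \<in> leading_block k ` unimod_diag m" by blast
qed

lemma scale_inv_St_comp_first_cols:
  assumes k: "k \<le> m"
  shows "scale_inv_St m m (g \<circ> first_cols k) \<longleftrightarrow> scale_inv_St k m g"
proof -
  have "scale_inv_St m m (g \<circ> first_cols k) \<longleftrightarrow>
    (\<forall>U\<in>stiefel m m. \<forall>R\<in>unimod_diag m.
       g (first_cols k U * leading_block k R) = g (first_cols k U))"
    unfolding scale_inv_St_def stiefel_def unimod_diag_def
    using first_cols_mult_diagonal[OF _ _ _ k] by auto
  also have "\<dots> \<longleftrightarrow> (\<forall>X\<in>first_cols k ` stiefel m m. \<forall>S\<in>leading_block k ` unimod_diag m. g (X * S) = g X)"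
    by blast
  also have "\<dots> \<longleftrightarrow> scale_inv_St k m g"
    unfolding first_cols_image_stiefel[OF k] leading_block_image_unimod_diag[OF k] scale_inv_St_def ..
  finally show ?thesis .
qed

definition frames_except ::
  "nat \<Rightarrow> (nat \<Rightarrow> nat) \<Rightarrow> (nat \<Rightarrow> nat) \<Rightarrow> nat \<Rightarrow> complex mat list \<Rightarrow> bool" where
  "frames_except d r n p Xs \<longleftrightarrow>
     length Xs = d \<and> (\<forall>q<d. q \<noteq> p \<longrightarrow> Xs ! q \<in> stiefel (r q) (n q))"

lemma multi_scale_inv_altdef:
  "multi_scale_inv d r n f \<longleftrightarrow>
     (\<forall>p<d. \<forall>Xs. frames_except d r n p Xs \<longrightarrow> scale_inv_St (r p) (n p) (\<lambda>X. f (Xs[p := X])))"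
  unfolding multi_scale_inv_def frames_except_def ..

lemma rho_list_update:
  assumes "length Us = d" and "p < d"
  shows "rho d r (Us[p := U]) = (rho d r Us)[p := first_cols (r p) U]"
  using assms unfolding rho_def by (auto intro!: nth_equalityI simp: nth_list_update)

lemma frames_except_rho:
  assumes "frames_except d n n p Us" and "\<forall>q<d. r q \<le> n q"
  shows "frames_except d r n p (rho d r Us)"
  using assms first_cols_in_stiefel unfolding frames_except_def rho_def by auto

lemma frames_except_rho_surj:
  assumes Xs: "frames_except d r n p Xs" and r_le_n: "\<forall>q<d. r q \<le> n q"
  shows "\<exists>Us. frames_except d n n p Us \<and> (\<forall>X. (rho d r Us)[p := X] = Xs[p := X])"
proof -
  have liftable: "\<forall>q\<in>{q. q < d \<and> q \<noteq> p}. \<exists>U. U \<in> stiefel (n q) (n q) \<and> first_cols (r q) U = Xs ! q"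
  proof
    fix q assume "q \<in> {q. q < d \<and> q \<noteq> p}"
    then have "r q \<le> n q" "Xs ! q \<in> stiefel (r q) (n q)"
      using Xs r_le_n unfolding frames_except_def by auto
    then have "Xs ! q \<in> first_cols (r q) ` stiefel (n q) (n q)"
      by (simp only: first_cols_image_stiefel)
    then show "\<exists>U. U \<in> stiefel (n q) (n q) \<and> first_cols (r q) U = Xs ! q"
      by (auto simp: image_iff)
  qed
  obtain lift where lift: "\<And>q. q < d \<Longrightarrow> q \<noteq> p \<Longrightarrow>
      lift q \<in> stiefel (n q) (n q) \<and> first_cols (r q) (lift q) = Xs ! q"
    using bchoice[OF liftable] by auto
  define Us where "Us = map lift [0..<d]"
  have "frames_except d n n p Us"
    unfolding Us_def frames_except_def using lift by auto
  moreover have "(rho d r Us)[p := X] = Xs[p := X]" for X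
  proof (rule nth_equalityI)
    show "length ((rho d r Us)[p := X]) = length (Xs[p := X])"
      using Xs by (simp add: frames_except_def Us_def rho_def)
    fix i assume "i < length ((rho d r Us)[p := X])"
    then show "(rho d r Us)[p := X] ! i = Xs[p := X] ! i"
      using Xs lift by (cases "i = p") (auto simp: Us_def rho_def frames_except_def)
  qed
  ultimately show ?thesis by blast
qed

lemma scale_inv_component_rho:
  assumes p: "p < d" and r_le_n: "\<forall>q<d. r q \<le> n q"
  shows "(\<forall>Us. frames_except d n n p Us \<longrightarrow>
           scale_inv_St (n p) (n p) (\<lambda>U. f (rho d r (Us[p := U])))) \<longleftrightarrow>
         (\<forall>Xs. frames_except d r n p Xs \<longrightarrow> scale_inv_St (r p) (n p) (\<lambda>X. f (Xs[p := X])))"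
    (is "(\<forall>Us. _ \<longrightarrow> ?lifted Us) \<longleftrightarrow> (\<forall>Xs. _ \<longrightarrow> ?truncated Xs)")
proof -
  have lifted_iff: "?lifted Us \<longleftrightarrow> ?truncated (rho d r Us)" if "frames_except d n n p Us" for Us
    using that p r_le_n scale_inv_St_comp_first_cols[of "r p" "n p" "\<lambda>X. f ((rho d r Us)[p := X])"]
    by (simp add: frames_except_def rho_list_update comp_def)
  show ?thesis
  proof (intro iffI allI impI)
    fix Xs assume lifted: "\<forall>Us. frames_except d n n p Us \<longrightarrow> ?lifted Us"
      and Xs: "frames_except d r n p Xs"
    obtain Us where Us: "frames_except d n n p Us" "\<forall>X. (rho d r Us)[p := X] = Xs[p := X]"
      using frames_except_rho_surj[OF Xs r_le_n] by blast
    have "?truncated (rho d r Us)" using lifted lifted_iff Us(1) by blast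
    then show "?truncated Xs" using Us(2) by simp
  next
    fix Us assume "\<forall>Xs. frames_except d r n p Xs \<longrightarrow> ?truncated Xs" and "frames_except d n n p Us"
    then show "?lifted Us" using lifted_iff frames_except_rho[OF _ r_le_n] by blast
  qed
qed

theorem corollary2p5:
  fixes d :: nat and r n :: "nat \<Rightarrow> nat" and f :: "complex mat list \<Rightarrow> real"
  assumes "d \<ge> 2"
    and "\<forall>p<d. 1 \<le> r p \<and> r p \<le> n p"
  shows "multi_scale_inv d r n f \<longleftrightarrow> multi_scale_inv d n n (f \<circ> rho d r)"
proof -
  have "\<forall>q<d. r q \<le> n q" using assms(2) by auto
  then show ?thesis
    unfolding multi_scale_inv_altdef comp_def using scale_inv_component_rho by blast
qed

end
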